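(* Let $\mathcal{G}$ be a locally finite one-ended Borel graph on a standard Borel space $X$ and let $\mathcal{B}$ be a Borel generating set for the cycle space of $\mathcal{G}$. Let $F\subseteq X$ be a finite set such that the induced subgraph $\mathcal{G}[F]$ is connected, and let $H:=\mathcal{G}[F]\setminus\ker(F)$. Then $\mathrm{ext}(H)$ is connected in $H$, i.e. any two vertices of $\mathrm{ext}(H)$ are joined by a path in $\mathcal{G}[F]$ using no edge of $\ker(F)$.
   Context: One-ended: every component is one-ended. The cycle space $\mathcal C(\mathcal G)$ is the subspace of $\mathbb Z_2[E(\mathcal G)]$ (finitely supported edge sets) generated by indicator functions of (finite) cycles. A Borel generating set is a Borel family $\mathcal B$ of finite cycles of $\mathcal G$ whose indicator functions generate $\mathcal C(\mathcal G)$. For an edge $e$, $e^\ast:=\{C\in\mathcal B: e\in E(C)\}$; for $U\subseteq X$, $\ker(U):=\{e\in\mathcal G: \text{every } C\in e^\ast \text{ is contained in } \mathcal G[U]\}$. For a finite subgraph $H$ of $\mathcal G$, the exterior $\mathrm{ext}(H)\subseteq V(H)$ is the set of vertices of $H$ belonging to an $H$-connected component $K$ for which there is an infinite ray in $\mathcal G$ starting at a vertex of $K$ and meeting $H$ only at its starting vertex. *)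

theory Defs
  imports Main
begin

text \<open>A graph on the vertex type 'a is a symmetric irreflexive relation G.
  Edges are unordered pairs {u,v}; edge sets are sets of such doubletons.\<close>

definition graph :: "('a \<times> 'a) set \<Rightarrow> bool" where
  "graph G \<longleftrightarrow> sym G \<and> irrefl G"

definition edges :: "('a \<times> 'a) set \<Rightarrow> 'a set set" where
  "edges G = {{u, v} | u v. (u, v) \<in> G}"

definition locally_finite :: "('a \<times> 'a) set \<Rightarrow> bool" where
  "locally_finite G \<longleftrightarrow> (\<forall>v. finite {w. (v, w) \<in> G})"

definition induced :: "('a \<times> 'a) set \<Rightarrow> 'a set \<Rightarrow> ('a \<times> 'a) set" where
  "induced G S = G \<inter> (S \<times> S)"

definition comp_in :: "('a \<times> 'a) set \<Rightarrow> 'a set \<Rightarrow> 'a \<Rightarrow> 'a set" where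
  "comp_in G D v = {w. (v, w) \<in> (induced G D)\<^sup>*}"

definition components :: "('a \<times> 'a) set \<Rightarrow> 'a set set" where
  "components G = {comp_in G UNIV v | v. True}"

text \<open>Every component is one-ended: it is infinite and, for every finite set S of
  vertices, the component minus S has exactly one infinite connected component
  (the number of ends being the supremum over finite S of the number of infinite
  components of C - S).\<close>
definition one_ended :: "('a \<times> 'a) set \<Rightarrow> bool" where
  "one_ended G \<longleftrightarrow> (\<forall>C \<in> components G. infinite C \<and>
     (\<forall>S. finite S \<longrightarrow>
        (\<exists>!K. K \<in> {comp_in G (C - S) v | v. v \<in> C - S} \<and> infinite K)))"

definition is_cycle :: "('a \<times> 'a) set \<Rightarrow> 'a set set \<Rightarrow> bool" where
  "is_cycle G Z \<longleftrightarrow> (\<exists>vs. length vs \<ge> 3 \<and> distinct vs \<and>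
     (\<forall>i < length vs. (vs ! i, vs ! ((i + 1) mod length vs)) \<in> G) \<and>
     Z = {{vs ! i, vs ! ((i + 1) mod length vs)} | i. i < length vs})"

inductive_set z2span :: "'b set set \<Rightarrow> 'b set set" for S where
  zero: "{} \<in> z2span S"
| add: "A \<in> S \<Longrightarrow> Y \<in> z2span S \<Longrightarrow> (A - Y) \<union> (Y - A) \<in> z2span S"

definition cycle_space :: "('a \<times> 'a) set \<Rightarrow> 'a set set set" where
  "cycle_space G = z2span {Z. is_cycle G Z}"

definition generating_set :: "('a \<times> 'a) set \<Rightarrow> 'a set set set \<Rightarrow> bool" where
  "generating_set G B \<longleftrightarrow> (\<forall>Z \<in> B. is_cycle G Z) \<and> z2span B = cycle_space G"

text \<open>e^* and ker(U). A cycle (given by its edge set Z) is contained in G[U]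
  iff all its vertices lie in U.\<close>
definition estar :: "'a set set set \<Rightarrow> 'a set \<Rightarrow> 'a set set set" where
  "estar B e = {Z \<in> B. e \<in> Z}"

definition ker :: "('a \<times> 'a) set \<Rightarrow> 'a set set set \<Rightarrow> 'a set \<Rightarrow> 'a set set" where
  "ker G B U = {e \<in> edges G. \<forall>Z \<in> estar B e. \<Union>Z \<subseteq> U}"

definition H_graph :: "('a \<times> 'a) set \<Rightarrow> 'a set set set \<Rightarrow> 'a set \<Rightarrow> ('a \<times> 'a) set" where
  "H_graph G B F = {(u, v) \<in> induced G F. {u, v} \<notin> ker G B F}"

definition ray :: "('a \<times> 'a) set \<Rightarrow> (nat \<Rightarrow> 'a) \<Rightarrow> bool" where
  "ray G r \<longleftrightarrow> inj r \<and> (\<forall>n. (r n, r (Suc n)) \<in> G)"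

definition ext :: "('a \<times> 'a) set \<Rightarrow> 'a set \<Rightarrow> ('a \<times> 'a) set \<Rightarrow> 'a set" where
  "ext G V E = {x \<in> V. \<exists>r. ray G r \<and> r 0 \<in> comp_in E V x \<and> (\<forall>n > 0. r n \<notin> V)}"

end

theory Submission
  imports Defs "HOL-Library.Transitive_Closure_Table"
begin

text \<open>Suppose x and y lie in different components of H, and let K be the H-component of x.
  Every edge of G[F] leaving K lies in ker(F), so every generating cycle meeting this edge cut
  lies in G[F] and therefore crosses the cut an even number of times; by linearity, so does every
  element of the cycle space. On the other hand, the rays from K and from F - K can be joined
  outside F by one-endedness, and together with a path through G[F] this yields a cycle crossing
  the cut exactly once.\<close>

definition edge_boundary :: "('a \<times> 'a) set \<Rightarrow> 'a set \<Rightarrow> 'a set set" where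
  "edge_boundary G K = {e \<in> edges G. e \<inter> K \<noteq> {} \<and> e - K \<noteq> {}}"

lemma edges_induced_subset_Pow: "edges (induced G F) \<subseteq> Pow F"
  unfolding edges_def induced_def by auto

lemma card_cyclic_changes_even:
  fixes P :: "nat \<Rightarrow> bool"
  shows "even (card {i. i < n \<and> P i \<noteq> P ((i + 1) mod n)})"
proof -
  define f where "f i = (if P i then 1 else 0 :: int)" for i
  have card_sum: "int (card {i. i < n \<and> P i \<noteq> P ((i + 1) mod n)}) =
      (\<Sum>i<n. if P i \<noteq> P ((i + 1) mod n) then 1 else 0)"
  proof -
    have "{i. i < n \<and> P i \<noteq> P ((i + 1) mod n)} = {..<n} \<inter> {i. P i \<noteq> P ((i + 1) mod n)}"
      by auto
    then show ?thesis by (simp add: sum.If_cases)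
  qed
  have change: "(if P i \<noteq> P j then 1 else 0 :: int) = f i + f j - 2 * f i * f j" for i j
    by (simp add: f_def)
  have rotate: "(\<Sum>i<n. f ((i + 1) mod n)) = (\<Sum>i<n. f i)"
  proof (cases n)
    case 0
    then show ?thesis by simp
  next
    case (Suc m)
    have "(\<Sum>i<n. f ((i + 1) mod n)) = (\<Sum>i<m. f ((i + 1) mod n)) + f 0"
      using Suc by simp
    also have "(\<Sum>i<m. f ((i + 1) mod n)) = (\<Sum>i<m. f (Suc i))"
      using Suc by (intro sum.cong) auto
    also have "(\<Sum>i<m. f (Suc i)) + f 0 = (\<Sum>i<n. f i)"
      unfolding Suc sum.lessThan_Suc_shift by simp
    finally show ?thesis .
  qed
  have "int (card {i. i < n \<and> P i \<noteq> P ((i + 1) mod n)}) =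
      2 * ((\<Sum>i<n. f i) - (\<Sum>i<n. f i * f ((i + 1) mod n)))"
    unfolding card_sum change using rotate
    by (simp add: sum.distrib sum_subtractf sum_distrib_left algebra_simps)
  then have "even (int (card {i. i < n \<and> P i \<noteq> P ((i + 1) mod n)}))" by simp
  then show ?thesis by simp
qed

lemma inj_on_cycle_edges:
  assumes "distinct vs" "length vs \<ge> 3"
  shows "inj_on (\<lambda>i. {vs ! i, vs ! ((i + 1) mod length vs)}) {..<length vs}"
proof
  let ?n = "length vs"
  fix i j assume i: "i \<in> {..<?n}" and j: "j \<in> {..<?n}"
    and same: "{vs ! i, vs ! ((i + 1) mod ?n)} = {vs ! j, vs ! ((j + 1) mod ?n)}"
  have index_eq: "a < ?n \<Longrightarrow> b < ?n \<Longrightarrow> vs ! a = vs ! b \<Longrightarrow> a = b" for a b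
    using assms(1) nth_eq_iff_index_eq by blast
  have "(i + 1) mod ?n < ?n" "(j + 1) mod ?n < ?n"
    using assms(2) by (auto intro!: mod_less_divisor)
  with same i j index_eq
  consider "i = j" | "i = (j + 1) mod ?n" "j = (i + 1) mod ?n"
    by (auto simp: doubleton_eq_iff)
  then show "i = j"
  proof cases
    case 2
    \<comment> \<open>consecutive edges coincide only in a 2-cycle\<close>
    show ?thesis
    proof (cases "j + 1 < ?n")
      case True
      with 2 have "j = (j + 2) mod ?n" by simp
      moreover from True have "j + 2 < ?n \<or> j + 2 = ?n" by linarith
      ultimately show ?thesis using assms(2) by auto
    next
      case False
      with j have "j + 1 = ?n" by simp
      with 2 assms(2) show ?thesis by auto
    qed
  qed
qed

lemma is_cycle_edge_boundary_even:
  assumes "is_cycle G Z"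
  shows "even (card (Z \<inter> edge_boundary G K))"
proof -
  obtain vs where len: "length vs \<ge> 3" and dist: "distinct vs"
    and steps: "\<forall>i < length vs. (vs ! i, vs ! ((i + 1) mod length vs)) \<in> G"
    and Z: "Z = {{vs ! i, vs ! ((i + 1) mod length vs)} | i. i < length vs}"
    using assms unfolding is_cycle_def by blast
  define n where "n = length vs"
  define e where "e i = {vs ! i, vs ! ((i + 1) mod n)}" for i
  define P where "P i \<longleftrightarrow> vs ! i \<in> K" for i
  have "Z \<inter> edge_boundary G K = e ` {i. i < n \<and> P i \<noteq> P ((i + 1) mod n)}"
    using steps unfolding Z edge_boundary_def edges_def e_def P_def n_def by blast
  moreover have "inj_on e {i. i < n \<and> P i \<noteq> P ((i + 1) mod n)}"
    using inj_on_cycle_edges[OF dist len] unfolding e_def n_def by (rule inj_on_subset) auto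
  ultimately show ?thesis
    using card_cyclic_changes_even[where P = P and n = n] by (simp add: card_image)
qed

lemma is_cycle_induced:
  assumes "is_cycle G Z" "\<Union>Z \<subseteq> F"
  shows "is_cycle (induced G F) Z"
proof -
  obtain vs where len: "length vs \<ge> 3" and "distinct vs"
    and steps: "\<forall>i < length vs. (vs ! i, vs ! ((i + 1) mod length vs)) \<in> G"
    and Z: "Z = {{vs ! i, vs ! ((i + 1) mod length vs)} | i. i < length vs}"
    using assms(1) unfolding is_cycle_def by blast
  have "vs ! i \<in> F" if "i < length vs" for i
    using that assms(2) unfolding Z by blast
  moreover have "(i + 1) mod length vs < length vs" for i
    using len by (auto intro!: mod_less_divisor)
  ultimately have "\<forall>i < length vs. (vs ! i, vs ! ((i + 1) mod length vs)) \<in> induced G F"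
    using steps unfolding induced_def by blast
  with len \<open>distinct vs\<close> Z show ?thesis
    unfolding is_cycle_def by blast
qed

lemma card_sym_diff:
  assumes "finite A" "finite B"
  shows "card (sym_diff A B) + 2 * card (A \<inter> B) = card A + card B"
proof -
  have "sym_diff A B = (A \<union> B) - (A \<inter> B)" by blast
  also have "card \<dots> = card (A \<union> B) - card (A \<inter> B)"
    using assms by (intro card_Diff_subset) auto
  finally have "card (sym_diff A B) = card (A \<union> B) - card (A \<inter> B)" .
  moreover have "card (A \<inter> B) \<le> card (A \<union> B)"
    using assms by (intro card_mono) auto
  ultimately show ?thesis
    using card_Un_Int[OF assms] by linarith
qed

lemma z2span_even_card_Int:
  assumes "finite D" "\<And>A. A \<in> S \<Longrightarrow> even (card (A \<inter> D))" "Y \<in> z2span S"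
  shows "even (card (Y \<inter> D))"
  using assms(3)
proof induction
  case (add A Y)
  have "sym_diff A Y \<inter> D = sym_diff (A \<inter> D) (Y \<inter> D)"
    by blast
  then have "card (sym_diff A Y \<inter> D) + 2 * card (A \<inter> D \<inter> (Y \<inter> D)) =
      card (A \<inter> D) + card (Y \<inter> D)"
    using card_sym_diff[of "A \<inter> D" "Y \<inter> D"] assms(1) by simp
  with assms(2)[OF add.hyps(1)] add.IH show ?case
    by presburger
qed simp

lemma is_cycle_in_cycle_space:
  assumes "is_cycle G Z"
  shows "Z \<in> cycle_space G"
proof -
  have "(Z - {}) \<union> ({} - Z) \<in> z2span {Z. is_cycle G Z}"
    using assms by (intro z2span.add z2span.zero) simp
  then show ?thesis
    unfolding cycle_space_def by simp
qed

lemma edge_boundary_subset_ker: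
  assumes "\<And>u v. (u, v) \<in> H_graph G B F \<Longrightarrow> u \<in> K \<longleftrightarrow> v \<in> K"
  shows "edge_boundary (induced G F) K \<subseteq> ker G B F"
proof
  fix e assume e: "e \<in> edge_boundary (induced G F) K"
  then obtain u v where uv: "e = {u, v}" "(u, v) \<in> induced G F" "(u \<in> K) \<noteq> (v \<in> K)"
    unfolding edge_boundary_def edges_def by auto
  then have "(u, v) \<notin> H_graph G B F"
    using assms by auto
  with uv have "e \<in> edges G \<and> e \<in> ker G B F"
    unfolding H_graph_def edges_def induced_def by auto
  then show "e \<in> ker G B F" ..
qed

lemma cycle_space_edge_boundary_even:
  assumes B: "generating_set G B" and "finite F"
    and boundary_ker: "edge_boundary (induced G F) K \<subseteq> ker G B F"
    and Z: "Z \<in> cycle_space G"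
  shows "even (card (Z \<inter> edge_boundary (induced G F) K))"
proof -
  let ?D = "edge_boundary (induced G F) K"
  have "?D \<subseteq> Pow F"
    using edges_induced_subset_Pow unfolding edge_boundary_def by blast
  then have "finite ?D"
    using \<open>finite F\<close> by (simp add: finite_subset)
  moreover have "even (card (A \<inter> ?D))" if A: "A \<in> B" for A
  proof (cases "A \<inter> ?D = {}")
    case False
    then obtain e where "e \<in> A" "e \<in> ker G B F"
      using boundary_ker by blast
    with A have "\<Union>A \<subseteq> F"
      unfolding ker_def estar_def by blast
    moreover have "is_cycle G A"
      using A B unfolding generating_set_def by blast
    ultimately show ?thesis
      using is_cycle_induced is_cycle_edge_boundary_even by blast
  qed simp
  moreover have "Z \<in> z2span B"
    using B Z unfolding generating_set_def by simp
  ultimately show ?thesis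
    by (rule z2span_even_card_Int)
qed

lemma rtrancl_first_entry:
  assumes "(a, b) \<in> R\<^sup>*" "a \<notin> K" "b \<in> K"
  obtains c d where "(a, c) \<in> (R \<inter> (- K) \<times> (- K))\<^sup>*" "(c, d) \<in> R" "c \<notin> K" "d \<in> K"
  using assms
proof (induction arbitrary: thesis rule: converse_rtrancl_induct)
  case (step a' z)
  show ?case
  proof (cases "z \<in> K")
    case True
    with step show ?thesis by blast
  next
    case False
    with step.prems step.IH obtain c d where
      "(z, c) \<in> (R \<inter> (- K) \<times> (- K))\<^sup>*" "(c, d) \<in> R" "c \<notin> K" "d \<in> K"
      by blast
    moreover have "(a', z) \<in> R \<inter> (- K) \<times> (- K)"
      using step False by auto
    ultimately show ?thesis
      using step.prems(1) converse_rtrancl_into_rtrancl by metis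
  qed
qed simp

lemma sym_rtrancl_step_iff:
  assumes "sym R" "(u, v) \<in> R"
  shows "(a, u) \<in> R\<^sup>* \<longleftrightarrow> (a, v) \<in> R\<^sup>*"
proof -
  from assms have "(v, u) \<in> R"
    by (rule symD)
  with assms(2) show ?thesis
    by (blast intro: rtrancl_into_rtrancl)
qed

lemma rtrancl_simple_walk:
  assumes "(a, b) \<in> R\<^sup>*" "a \<noteq> b"
  obtains xs where "distinct (a # xs)" "xs \<noteq> []" "last xs = b"
    "\<And>i. i < length xs \<Longrightarrow> ((a # xs) ! i, xs ! i) \<in> R"
proof -
  have "(\<lambda>x y. (x, y) \<in> R)\<^sup>*\<^sup>* a b"
    using assms(1) by (simp add: rtrancl_def)
  then obtain ys where "rtrancl_path (\<lambda>x y. (x, y) \<in> R) a ys b"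
    unfolding rtranclp_eq_rtrancl_path ..
  then obtain xs where path: "rtrancl_path (\<lambda>x y. (x, y) \<in> R) a xs b"
    and "distinct (a # xs)"
    by (rule rtrancl_path_distinct)
  moreover have "xs \<noteq> []"
    using path \<open>a \<noteq> b\<close> by (cases rule: rtrancl_path.cases) auto
  moreover from path this have "last xs = b"
    by (rule rtrancl_path_last)
  moreover have "((a # xs) ! i, xs ! i) \<in> R" if "i < length xs" for i
    using rtrancl_path_nth[OF path that] by simp
  ultimately show ?thesis
    using that by blast
qed

lemma cycle_crossing_once:
  assumes "(c, d) \<in> G" "c \<noteq> d" "{c, d} \<in> D"
    and "(d, c) \<in> {(a, b) \<in> G. {a, b} \<notin> D}\<^sup>*"
  obtains Z where "is_cycle G Z" "Z \<inter> D = {{c, d}}"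
proof -
  let ?W = "{(a, b) \<in> G. {a, b} \<notin> D}"
  obtain xs where dist: "distinct (d # xs)" and "xs \<noteq> []" and last: "last xs = c"
    and walk: "\<And>i. i < length xs \<Longrightarrow> ((d # xs) ! i, xs ! i) \<in> ?W"
    using rtrancl_simple_walk[OF assms(4)] \<open>c \<noteq> d\<close> by blast
  have "length xs \<ge> 2"
  proof (rule ccontr)
    assume "\<not> length xs \<ge> 2"
    with \<open>xs \<noteq> []\<close> have "length xs = 1"
      by (cases "length xs") auto
    with last have "xs = [c]"
      by (cases xs) auto
    with walk[of 0] assms(3) show False
      by (simp add: insert_commute)
  qed
  define vs where "vs = d # xs"
  define n where "n = length vs"
  have step: "(vs ! i, vs ! ((i + 1) mod n)) \<in> G \<and>
      ({vs ! i, vs ! ((i + 1) mod n)} \<in> D \<longleftrightarrow> i = length xs)" if "i < n" for i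
  proof (cases "i < length xs")
    case True
    then have "(i + 1) mod n = Suc i"
      unfolding n_def vs_def by simp
    with walk[OF True] True show ?thesis
      unfolding vs_def by simp
  next
    case False
    with that have i: "i = length xs"
      unfolding n_def vs_def by simp
    with last \<open>xs \<noteq> []\<close> have "(i + 1) mod n = 0" "vs ! i = c"
      unfolding n_def vs_def by (simp_all add: last_conv_nth)
    with i assms(1,3) show ?thesis
      unfolding vs_def by (simp add: insert_commute)
  qed
  define Z where "Z = {{vs ! i, vs ! ((i + 1) mod n)} | i. i < n}"
  have "is_cycle G Z"
    unfolding is_cycle_def
  proof (intro exI conjI)
    show "3 \<le> length vs" "distinct vs"
      using \<open>length xs \<ge> 2\<close> dist unfolding vs_def by simp_all
    show "\<forall>i < length vs. (vs ! i, vs ! ((i + 1) mod length vs)) \<in> G"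
      using step unfolding n_def by blast
    show "Z = {{vs ! i, vs ! ((i + 1) mod length vs)} | i. i < length vs}"
      unfolding Z_def n_def ..
  qed
  moreover have "length xs < n"
    unfolding n_def vs_def by simp
  then have "Z \<inter> D = {{vs ! length xs, vs ! ((length xs + 1) mod n)}}"
    using step unfolding Z_def by blast
  moreover have "{vs ! length xs, vs ! ((length xs + 1) mod n)} = {c, d}"
    using step[of "length xs"] last \<open>xs \<noteq> []\<close>
    by (simp add: n_def vs_def last_conv_nth)
  ultimately show ?thesis
    using that by simp
qed

lemma ray_rtrancl_induced:
  assumes "ray G r" "\<forall>k \<ge> m. r k \<in> D" "m \<le> n"
  shows "(r m, r n) \<in> (induced G D)\<^sup>*"
  using assms(3)
proof (induction n rule: dec_induct)
  case (step n)
  have "(r n, r (Suc n)) \<in> induced G D"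
    using assms(1,2) step.hyps unfolding ray_def induced_def by auto
  with step.IH show ?case ..
qed simp

lemma infinite_comp_in_ray:
  assumes "ray G r" "\<forall>k \<ge> m. r k \<in> D"
  shows "infinite (comp_in G D (r m))"
proof -
  have "r ` {m..} \<subseteq> comp_in G D (r m)"
    using ray_rtrancl_induced[OF assms] unfolding comp_in_def by auto
  moreover have "inj_on r {m..}"
    using assms(1) unfolding ray_def by (auto intro: inj_on_subset)
  then have "infinite (r ` {m..})"
    by (simp add: finite_image_iff infinite_Ici)
  ultimately show ?thesis
    using finite_subset by blast
qed

lemma one_ended_rays_joined_outside:
  assumes "sym G" "one_ended G" "finite F"
    and r: "ray G r" "\<forall>n > 0. r n \<notin> F"
    and s: "ray G s" "\<forall>n > 0. s n \<notin> F"
    and "(r 0, s 0) \<in> G\<^sup>*"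
  shows "(r 0, s 0) \<in> {(a, b) \<in> G. a \<notin> F \<or> b \<notin> F}\<^sup>*"
proof -
  let ?W = "{(a, b) \<in> G. a \<notin> F \<or> b \<notin> F}"
  define C where "C = comp_in G UNIV (r 0)"
  have G_UNIV: "induced G UNIV = G"
    unfolding induced_def by simp
  have "(r 0, r n) \<in> G\<^sup>*" "(s 0, s n) \<in> G\<^sup>*" for n
    using ray_rtrancl_induced[OF r(1), where D = UNIV and m = 0 and n = n]
      ray_rtrancl_induced[OF s(1), where D = UNIV and m = 0 and n = n]
    by (simp_all add: G_UNIV)
  with \<open>(r 0, s 0) \<in> G\<^sup>*\<close> have "r n \<in> C" "s n \<in> C" for n
    unfolding C_def comp_in_def G_UNIV by (auto intro: rtrancl_trans)
  with r(2) s(2) have tails: "\<forall>k \<ge> 1. r k \<in> C - F" "\<forall>k \<ge> 1. s k \<in> C - F"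
    by auto
  have "C \<in> components G"
    unfolding C_def components_def by blast
  with assms(2) have one_end: "infinite C \<and> (\<forall>S. finite S \<longrightarrow>
      (\<exists>!K. K \<in> {comp_in G (C - S) v | v. v \<in> C - S} \<and> infinite K))"
    unfolding one_ended_def by (rule bspec)
  have "\<exists>!K. K \<in> {comp_in G (C - F) v | v. v \<in> C - F} \<and> infinite K"
    using one_end[THEN conjunct2, rule_format, OF \<open>finite F\<close>] .
  then obtain K0 where K0: "\<And>K. K \<in> {comp_in G (C - F) v | v. v \<in> C - F} \<Longrightarrow>
      infinite K \<Longrightarrow> K = K0"
    unfolding Ex1_def by blast
  have "comp_in G (C - F) (r 1) = K0" "comp_in G (C - F) (s 1) = K0"
    using tails by (intro K0 infinite_comp_in_ray[OF r(1)] infinite_comp_in_ray[OF s(1)]; auto)+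
  then have "(r 1, s 1) \<in> (induced G (C - F))\<^sup>*"
    unfolding comp_in_def by blast
  moreover have "induced G (C - F) \<subseteq> ?W"
    unfolding induced_def by auto
  ultimately have tails_joined: "(r 1, s 1) \<in> ?W\<^sup>*"
    using rtrancl_mono by blast
  have "(r 0, r 1) \<in> G" "(s 0, s 1) \<in> G"
    using r(1) s(1) unfolding ray_def One_nat_def by blast+
  then have "(r 0, r 1) \<in> ?W" "(s 1, s 0) \<in> ?W"
    using r(2) s(2) \<open>sym G\<close> by (auto dest: symD)
  with tails_joined show ?thesis
    by (meson converse_rtrancl_into_rtrancl rtrancl_into_rtrancl)
qed

lemma H_graph_rtrancl_in:
  assumes "(x, y) \<in> (H_graph G B F)\<^sup>*" "x \<in> F"
  shows "y \<in> F"
  using assms by (induction rule: rtrancl_induct) (auto simp: H_graph_def induced_def)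

lemma sym_H_graph: "sym G \<Longrightarrow> sym (H_graph G B F)"
  unfolding H_graph_def induced_def sym_def by (auto simp: insert_commute)

lemma ext_H_graphE:
  assumes "x \<in> ext G F (H_graph G B F)"
  obtains r where "ray G r" "(x, r 0) \<in> (H_graph G B F)\<^sup>*" "r 0 \<in> F" "\<forall>n > 0. r n \<notin> F"
proof -
  have "induced (H_graph G B F) F = H_graph G B F"
    unfolding H_graph_def induced_def by auto
  moreover from assms obtain r where
    "ray G r" "r 0 \<in> comp_in (H_graph G B F) F x" "\<forall>n > 0. r n \<notin> F" "x \<in> F"
    unfolding ext_def by blast
  ultimately have r: "ray G r" "(x, r 0) \<in> (H_graph G B F)\<^sup>*" "\<forall>n > 0. r n \<notin> F"
    and "x \<in> F"
    unfolding comp_in_def by simp_all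
  from r(2) \<open>x \<in> F\<close> have "r 0 \<in> F"
    by (rule H_graph_rtrancl_in)
  with r that show ?thesis by blast
qed

lemma cycle_crossing_boundary_once:
  assumes "sym G" "one_ended G" "finite F"
    and connected: "\<forall>x \<in> F. \<forall>y \<in> F. (x, y) \<in> (induced G F)\<^sup>*"
    and r: "ray G r" "r 0 \<in> K" "\<forall>n > 0. r n \<notin> F"
    and s: "ray G s" "s 0 \<in> F - K" "\<forall>n > 0. s n \<notin> F"
    and "K \<subseteq> F"
    and K_connected: "\<And>u. u \<in> K \<Longrightarrow>
      (u, r 0) \<in> {(a, b) \<in> G. {a, b} \<notin> edge_boundary (induced G F) K}\<^sup>*"
  obtains Z where "is_cycle G Z" "card (Z \<inter> edge_boundary (induced G F) K) = 1"
proof -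
  define D where "D = edge_boundary (induced G F) K"
  let ?W = "{(a, b) \<in> G. {a, b} \<notin> D}"
  have "r 0 \<in> F" "s 0 \<in> F" "s 0 \<notin> K"
    using r(2) s(2) \<open>K \<subseteq> F\<close> by auto
  with connected have "(s 0, r 0) \<in> (induced G F)\<^sup>*" "(r 0, s 0) \<in> (induced G F)\<^sup>*"
    by simp_all
  from this(1) \<open>s 0 \<notin> K\<close> r(2) obtain c d
    where cd: "(s 0, c) \<in> (induced G F \<inter> (- K) \<times> (- K))\<^sup>*"
      "(c, d) \<in> induced G F" "c \<notin> K" "d \<in> K"
    by (rule rtrancl_first_entry)
  \<comment> \<open>the closing walk runs from d to r 0 inside K, from r 0 to s 0 outside F,
    and from s 0 to c outside K\<close>
  have "(d, r 0) \<in> ?W\<^sup>*"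
    using K_connected cd(4) unfolding D_def .
  moreover have "(r 0, s 0) \<in> ?W\<^sup>*"
  proof -
    have "(r 0, s 0) \<in> G\<^sup>*"
      using \<open>(r 0, s 0) \<in> (induced G F)\<^sup>*\<close> rtrancl_mono[of "induced G F" G]
      unfolding induced_def by blast
    from one_ended_rays_joined_outside[OF assms(1-3) r(1,3) s(1,3) this]
    have "(r 0, s 0) \<in> {(a, b) \<in> G. a \<notin> F \<or> b \<notin> F}\<^sup>*" .
    moreover have "a \<in> F \<and> b \<in> F" if "{a, b} \<in> D" for a b
      using that edges_induced_subset_Pow unfolding D_def edge_boundary_def by blast
    then have "{(a, b) \<in> G. a \<notin> F \<or> b \<notin> F} \<subseteq> ?W"
      by auto
    ultimately show ?thesis
      using rtrancl_mono by blast
  qed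
  moreover have "(s 0, c) \<in> ?W\<^sup>*"
  proof -
    have "induced G F \<inter> (- K) \<times> (- K) \<subseteq> ?W"
      unfolding D_def edge_boundary_def induced_def by auto
    with cd(1) show ?thesis
      using rtrancl_mono by blast
  qed
  ultimately have walk: "(d, c) \<in> ?W\<^sup>*"
    by (meson rtrancl_trans)
  have "(c, d) \<in> G" "c \<noteq> d" "{c, d} \<in> D"
    using cd unfolding D_def edge_boundary_def edges_def induced_def by auto
  then obtain Z where "is_cycle G Z" "Z \<inter> D = {{c, d}}"
    using walk by (rule cycle_crossing_once)
  with that show ?thesis
    unfolding D_def by simp
qed

lemma outward_rays_H_connected:
  assumes "sym G" "one_ended G" "generating_set G B" "finite F"
    and connected: "\<forall>x \<in> F. \<forall>y \<in> F. (x, y) \<in> (induced G F)\<^sup>*"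
    and r: "ray G r" "r 0 \<in> F" "\<forall>n > 0. r n \<notin> F"
    and s: "ray G s" "s 0 \<in> F" "\<forall>n > 0. s n \<notin> F"
  shows "(r 0, s 0) \<in> (H_graph G B F)\<^sup>*"
proof (rule ccontr)
  let ?H = "H_graph G B F"
  define K where "K = {w. (r 0, w) \<in> ?H\<^sup>*}"
  let ?D = "edge_boundary (induced G F) K"
  assume "(r 0, s 0) \<notin> ?H\<^sup>*"
  then have "r 0 \<in> K" "s 0 \<in> F - K"
    using s(2) unfolding K_def by auto
  have sym_H: "sym ?H"
    using \<open>sym G\<close> by (rule sym_H_graph)
  then have K_closed: "u \<in> K \<longleftrightarrow> v \<in> K" if "(u, v) \<in> ?H" for u v
    using that unfolding K_def by (simp add: sym_rtrancl_step_iff)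
  have "K \<subseteq> F"
    using H_graph_rtrancl_in[OF _ r(2)] unfolding K_def by auto
  moreover have "(u, r 0) \<in> {(a, b) \<in> G. {a, b} \<notin> ?D}\<^sup>*" if "u \<in> K" for u
  proof -
    have "(u, r 0) \<in> ?H\<^sup>*"
      using that sym_H unfolding K_def by (auto intro: symD[OF sym_rtrancl])
    moreover have "?H \<subseteq> {(a, b) \<in> G. {a, b} \<notin> ?D}"
      using K_closed unfolding H_graph_def induced_def edge_boundary_def by auto
    ultimately show ?thesis
      using rtrancl_mono by blast
  qed
  ultimately obtain Z where "is_cycle G Z" "card (Z \<inter> ?D) = 1"
    using cycle_crossing_boundary_once[OF assms(1,2,4) connected r(1) \<open>r 0 \<in> K\<close> r(3)
        s(1) \<open>s 0 \<in> F - K\<close> s(3)] by blast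
  moreover have "?D \<subseteq> ker G B F"
    using K_closed by (rule edge_boundary_subset_ker)
  ultimately show False
    using cycle_space_edge_boundary_even[OF assms(3,4)] is_cycle_in_cycle_space by fastforce
qed

theorem lemma3p14:
  fixes G :: "('a \<times> 'a) set" and B :: "'a set set set" and F :: "'a set"
  assumes "graph G" and "locally_finite G" and "one_ended G"
    and "generating_set G B"
    and "finite F"
    and "\<forall>x \<in> F. \<forall>y \<in> F. (x, y) \<in> (induced G F)\<^sup>*"
  shows "\<forall>x \<in> ext G F (H_graph G B F). \<forall>y \<in> ext G F (H_graph G B F).
           (x, y) \<in> (H_graph G B F)\<^sup>*"
proof (intro ballI)
  fix x y
  assume "x \<in> ext G F (H_graph G B F)" "y \<in> ext G F (H_graph G B F)"
  obtain r where r: "ray G r" "(x, r 0) \<in> (H_graph G B F)\<^sup>*" "r 0 \<in> F" "\<forall>n > 0. r n \<notin> F"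
    using \<open>x \<in> ext G F (H_graph G B F)\<close> by (rule ext_H_graphE)
  obtain s where s: "ray G s" "(y, s 0) \<in> (H_graph G B F)\<^sup>*" "s 0 \<in> F" "\<forall>n > 0. s n \<notin> F"
    using \<open>y \<in> ext G F (H_graph G B F)\<close> by (rule ext_H_graphE)
  have "sym G"
    using \<open>graph G\<close> unfolding graph_def by simp
  have "(r 0, s 0) \<in> (H_graph G B F)\<^sup>*"
    using outward_rays_H_connected[OF \<open>sym G\<close> assms(3-6) r(1,3,4) s(1,3,4)] .
  moreover have "(s 0, y) \<in> (H_graph G B F)\<^sup>*"
    using s(2) sym_H_graph[OF \<open>sym G\<close>] by (auto intro: symD[OF sym_rtrancl])
  ultimately show "(x, y) \<in> (H_graph G B F)\<^sup>*"
    using r(2) by (meson rtrancl_trans)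
qed

end
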